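(* Let $\boldsymbol{d}$ be a graphical degree sequence with minimum degree at least $3$. Let $(G,H)$ be a switch on $\mathcal{G}(n,\boldsymbol{d})$ which removes the edges $a_1a_2,a_3a_4$ and inserts the edges $a_1a_3,a_2a_4$, and let $D=\{a_1,a_2,a_3,a_4\}$. Suppose that all of the following hold: neither of the diagonals $a_1a_4$, $a_2a_3$ is an edge of $G$; no pair of vertices in $D$ has a common neighbour in $G$; and there is no triangle in $G$ on vertices $a_j,u,w$ with $j\in[4]$ and $\{u,w\}\cap D=\emptyset$. Then there is a triangle-switch simulation path of length at most $5$ from $G$ to $H$.
   Context: $\mathcal{G}(n,\boldsymbol{d})$ is the set of labelled simple graphs on $[n]$ with vertex $i$ of degree $d_i$. A switch $(G,H)$ on $\mathcal{G}(n,\boldsymbol{d})$: $G\in\mathcal{G}(n,\boldsymbol{d})$, $F$ is a set of two vertex-disjoint edges of $G$ on vertex set $\{a_1,a_2,a_3,a_4\}$, $F'$ is a different perfect matching of these four vertices with $F'\cap(E(G)\setminus F)=\emptyset$, and $H$ has edge set $(E(G)\setminus F)\cup F'$. A triangle switch is a switch $(G,H)$ such that for some pair $aa'\in F\cup F'$, $a$ and $a'$ have a common neighbour in $G$ outside $\{a_1,a_2,a_3,a_4\}$. A triangle-switch simulation path of length $\kappa$ from $G$ to $H$ is a sequence $G=X_0,X_1,\dots,X_\kappa=H$ of graphs in $\mathcal{G}(n,\boldsymbol{d})$ such that each $(X_i,X_{i+1})$ is a triangle switch. *)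

theory Defs
  imports Main
begin

text \<open>Simple graphs on vertex set [n] = {1..n}, represented by their edge sets
 (a set of 2-element subsets of {1..n}).\<close>

type_synonym graph = "nat set set"

definition simple_graph_on :: "nat \<Rightarrow> graph \<Rightarrow> bool" where
  "simple_graph_on n E \<longleftrightarrow> (\<forall>e\<in>E. e \<subseteq> {1..n} \<and> card e = 2)"

definition degree :: "graph \<Rightarrow> nat \<Rightarrow> nat" where
  "degree E i = card {e \<in> E. i \<in> e}"

definition Gnd :: "nat \<Rightarrow> (nat \<Rightarrow> nat) \<Rightarrow> graph set" where
  "Gnd n d = {E. simple_graph_on n E \<and> (\<forall>i\<in>{1..n}. degree E i = d i)}"

definition graphical :: "nat \<Rightarrow> (nat \<Rightarrow> nat) \<Rightarrow> bool" where
  "graphical n d \<longleftrightarrow> Gnd n d \<noteq> {}"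

definition common_nbr_outside :: "graph \<Rightarrow> nat set \<Rightarrow> nat \<Rightarrow> nat \<Rightarrow> bool" where
  "common_nbr_outside E D a b \<longleftrightarrow> (\<exists>w. w \<notin> D \<and> {a,w} \<in> E \<and> {b,w} \<in> E)"

definition switch_with :: "nat \<Rightarrow> (nat \<Rightarrow> nat) \<Rightarrow> (nat set \<Rightarrow> nat set set \<Rightarrow> bool)
    \<Rightarrow> graph \<Rightarrow> graph \<Rightarrow> bool" where
  "switch_with n d P G H \<longleftrightarrow> G \<in> Gnd n d \<and>
     (\<exists>a1 a2 a3 a4 F F'. distinct [a1,a2,a3,a4] \<and> {a1,a2,a3,a4} \<subseteq> {1..n} \<and>
        F = {{a1,a2},{a3,a4}} \<and> F \<subseteq> G \<and>
        F' \<in> {{{a1,a3},{a2,a4}}, {{a1,a4},{a2,a3}}} \<and>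
        F' \<inter> (G - F) = {} \<and>
        H = (G - F) \<union> F' \<and> P {a1,a2,a3,a4} (F \<union> F'))"

definition is_switch :: "nat \<Rightarrow> (nat \<Rightarrow> nat) \<Rightarrow> graph \<Rightarrow> graph \<Rightarrow> bool" where
  "is_switch n d G H \<longleftrightarrow> switch_with n d (\<lambda>D P. True) G H"

definition triangle_switch :: "nat \<Rightarrow> (nat \<Rightarrow> nat) \<Rightarrow> graph \<Rightarrow> graph \<Rightarrow> bool" where
  "triangle_switch n d G H \<longleftrightarrow>
     switch_with n d (\<lambda>D P. \<exists>a a'. {a,a'} \<in> P \<and> common_nbr_outside G D a a') G H"

definition tri_sim_path :: "nat \<Rightarrow> (nat \<Rightarrow> nat) \<Rightarrow> nat \<Rightarrow> graph \<Rightarrow> graph \<Rightarrow> bool" where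
  "tri_sim_path n d \<kappa> G H \<longleftrightarrow> (\<exists>X :: nat \<Rightarrow> graph. X 0 = G \<and> X \<kappa> = H \<and>
      (\<forall>i\<le>\<kappa>. X i \<in> Gnd n d) \<and> (\<forall>i<\<kappa>. triangle_switch n d (X i) (X (Suc i))))"

end

theory Submission
  imports Defs
begin

(* Write D = {a1,a2,a3,a4}. As d >= 3, a1 has two neighbours x, p other than a2; they lie outside
   D and are not adjacent, since no triangle passes through a1. The switch is realised by four
   triangle switches in either of two local configurations: two paths a1 x y and a1 p z with xp
   and yz non-edges; or a neighbour p of a1 and a vertex y not adjacent to p such that p and y
   have two common neighbours z1, z2 other than a1. If all neighbours of x except a1 are adjacent
   to p, the second configuration occurs with y = x. Otherwise pick a neighbour y of x, y <> a1,
   not adjacent to p: either some neighbour z <> a1 of p is not adjacent to y (first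
   configuration), or all are (second configuration with this y). The absence of common
   neighbours and of triangles at D keeps all auxiliary vertices outside D and distinct. *)

definition switch :: "graph \<Rightarrow> nat \<Rightarrow> nat \<Rightarrow> nat \<Rightarrow> nat \<Rightarrow> graph" where
  "switch G b1 b2 b3 b4 = (G - {{b1,b2},{b3,b4}}) \<union> {{b1,b3},{b2,b4}}"

lemma mem_switch:
  "e \<in> switch G b1 b2 b3 b4 \<longleftrightarrow>
     e = {b1,b3} \<or> e = {b2,b4} \<or> (e \<in> G \<and> e \<noteq> {b1,b2} \<and> e \<noteq> {b3,b4})"
  unfolding switch_def by blast

lemma Gnd_edgeD:
  assumes "G \<in> Gnd n d" "{u,v} \<in> G"
  shows "u \<noteq> v" "u \<in> {1..n}" "v \<in> {1..n}"
proof -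
  have "{u,v} \<subseteq> {1..n}" "card {u,v} = 2"
    using assms unfolding Gnd_def simple_graph_on_def by blast+
  then show "u \<noteq> v" "u \<in> {1..n}" "v \<in> {1..n}" by (auto simp: card_2_iff)
qed

lemma finite_Gnd:
  assumes "G \<in> Gnd n d" shows "finite G"
proof -
  have "G \<subseteq> Pow {1..n}" using assms unfolding Gnd_def simple_graph_on_def by blast
  then show ?thesis by (rule finite_subset) simp
qed

lemma Gnd_neighbour_avoiding:
  assumes G: "G \<in> Gnd n d" and "v \<in> {1..n}" "3 \<le> d v"
  shows "\<exists>w. {v,w} \<in> G \<and> w \<noteq> b \<and> w \<noteq> c"
proof (rule ccontr)
  assume no_nbr: "\<nexists>w. {v,w} \<in> G \<and> w \<noteq> b \<and> w \<noteq> c"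
  have "{e \<in> G. v \<in> e} \<subseteq> {{v,b},{v,c}}"
  proof
    fix e assume e: "e \<in> {e \<in> G. v \<in> e}"
    then obtain u w where "e = {u,w}"
      using G unfolding Gnd_def simple_graph_on_def by (auto simp: card_2_iff)
    with e obtain w' where "e = {v,w'}"
      by (metis CollectD insertE insert_commute singletonD)
    with e no_nbr show "e \<in> {{v,b},{v,c}}" by auto
  qed
  then have "degree G v \<le> card {{v,b},{v,c}}"
    unfolding degree_def by (rule card_mono[rotated]) simp
  also have "\<dots> \<le> 2"
    by (simp add: card_insert_le_m1)
  finally show False
    using G assms(2,3) unfolding Gnd_def by auto
qed

lemma card_Diff_Un_eq:
  assumes "finite S" "A \<subseteq> S" "finite B" "B \<inter> S = {}" "card A = card B"
  shows "card (S - A \<union> B) = card S"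
proof -
  have "card (S - A \<union> B) = card (S - A) + card B"
    using assms by (intro card_Un_disjoint) auto
  also have "\<dots> = card S"
    using assms card_mono[OF assms(1,2)] by (simp add: card_Diff_subset finite_subset)
  finally show ?thesis .
qed

lemma card_incident_matching:
  assumes "distinct [a,b,c,e]"
  shows "card {f \<in> {{a,b},{c,e}}. i \<in> f} = (if i \<in> {a,b,c,e} then 1 else 0)"
proof -
  have "{f \<in> {{a,b},{c,e}}. i \<in> f} =
      (if i \<in> {a,b} then {{a,b}} else if i \<in> {c,e} then {{c,e}} else {})"
    using assms by auto
  then show ?thesis by simp
qed

lemma degree_switch:
  assumes "finite G" "distinct [b1,b2,b3,b4]"
    and "{b1,b2} \<in> G" "{b3,b4} \<in> G" "{b1,b3} \<notin> G" "{b2,b4} \<notin> G"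
  shows "degree (switch G b1 b2 b3 b4) i = degree G i"
proof -
  let ?removed = "{e \<in> {{b1,b2},{b3,b4}}. i \<in> e}" and ?added = "{e \<in> {{b1,b3},{b2,b4}}. i \<in> e}"
  have "{e \<in> switch G b1 b2 b3 b4. i \<in> e} = {e \<in> G. i \<in> e} - ?removed \<union> ?added"
    unfolding switch_def by blast
  moreover have "card ?removed = card ?added"
    using card_incident_matching[of b1 b2 b3 b4 i] card_incident_matching[of b1 b3 b2 b4 i] assms(2)
    by (simp add: insert_commute)
  then have "card ({e \<in> G. i \<in> e} - ?removed \<union> ?added) = card {e \<in> G. i \<in> e}"
    using assms by (intro card_Diff_Un_eq) auto
  ultimately show ?thesis
    unfolding degree_def by simp
qed

lemma switch_in_Gnd:
  assumes G: "G \<in> Gnd n d" and "distinct [b1,b2,b3,b4]"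
    and "{b1,b2} \<in> G" "{b3,b4} \<in> G" "{b1,b3} \<notin> G" "{b2,b4} \<notin> G"
  shows "switch G b1 b2 b3 b4 \<in> Gnd n d"
proof -
  have "{b1,b2,b3,b4} \<subseteq> {1..n}"
    using Gnd_edgeD[OF G \<open>{b1,b2} \<in> G\<close>] Gnd_edgeD[OF G \<open>{b3,b4} \<in> G\<close>] by auto
  then have "simple_graph_on n (G \<union> {{b1,b3},{b2,b4}})"
    using G assms(2) unfolding Gnd_def simple_graph_on_def by auto
  moreover have "switch G b1 b2 b3 b4 \<subseteq> G \<union> {{b1,b3},{b2,b4}}"
    unfolding switch_def by blast
  ultimately have "simple_graph_on n (switch G b1 b2 b3 b4)"
    unfolding simple_graph_on_def by (meson subsetD)
  then show ?thesis
    using G degree_switch[OF finite_Gnd[OF G] assms(2-)] unfolding Gnd_def by simp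
qed

lemma switch_with_in_Gnd:
  assumes "switch_with n d P G H"
  shows "H \<in> Gnd n d"
proof -
  obtain a1 a2 a3 a4 F' where G: "G \<in> Gnd n d" and dist: "distinct [a1,a2,a3,a4]"
    and E: "{a1,a2} \<in> G" "{a3,a4} \<in> G"
    and F': "F' \<in> {{{a1,a3},{a2,a4}}, {{a1,a4},{a2,a3}}}" "F' \<inter> (G - {{a1,a2},{a3,a4}}) = {}"
    and H: "H = (G - {{a1,a2},{a3,a4}}) \<union> F'"
    using assms unfolding switch_with_def by blast
  have not_removed: "{a1,a3} \<noteq> {a1,a2}" "{a1,a3} \<noteq> {a3,a4}" "{a2,a4} \<noteq> {a1,a2}" "{a2,a4} \<noteq> {a3,a4}"
    "{a1,a4} \<noteq> {a1,a2}" "{a1,a4} \<noteq> {a3,a4}" "{a2,a3} \<noteq> {a1,a2}" "{a2,a3} \<noteq> {a3,a4}"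
    using dist by (auto simp: doubleton_eq_iff)
  from F'(1) consider "F' = {{a1,a3},{a2,a4}}" | "F' = {{a1,a4},{a2,a3}}" by blast
  then show ?thesis
  proof cases
    case 1
    then have "{a1,a3} \<notin> G" "{a2,a4} \<notin> G" "H = switch G a1 a2 a3 a4"
      using F'(2) H not_removed unfolding switch_def by auto
    then show ?thesis using switch_in_Gnd[OF G dist E] by simp
  next
    case 2
    then have "{a1,a4} \<notin> G" "{a2,a3} \<notin> G" "H = switch G a1 a2 a4 a3"
      using F'(2) H not_removed unfolding switch_def by (auto simp: insert_commute)
    moreover have "distinct [a1,a2,a4,a3]" "{a4,a3} \<in> G"
      using dist E(2) by (auto simp: insert_commute)
    ultimately show ?thesis using switch_in_Gnd[OF G _ E(1)] by simp
  qed
qed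

lemma triangle_switchI:
  assumes G: "G \<in> Gnd n d" and dist: "distinct [b1,b2,b3,b4]"
    and E: "{b1,b2} \<in> G" "{b3,b4} \<in> G" and N: "{b1,b3} \<notin> G" "{b2,b4} \<notin> G"
    and uv: "{u,v} \<in> {{b1,b2},{b3,b4},{b1,b3},{b2,b4}}"
    and h: "h \<notin> {b1,b2,b3,b4}" "{u,h} \<in> G" "{v,h} \<in> G"
  shows "triangle_switch n d G (switch G b1 b2 b3 b4)"
  unfolding triangle_switch_def switch_with_def
proof (intro conjI exI)
  show "{b1,b2,b3,b4} \<subseteq> {1..n}"
    using Gnd_edgeD[OF G E(1)] Gnd_edgeD[OF G E(2)] by auto
  show "{{b1,b3},{b2,b4}} \<inter> (G - {{b1,b2},{b3,b4}}) = {}"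
    using N by auto
  show "common_nbr_outside G {b1,b2,b3,b4} u v"
    unfolding common_nbr_outside_def using h by blast
  show "{u,v} \<in> {{b1,b2},{b3,b4}} \<union> {{b1,b3},{b2,b4}}"
    using uv by blast
qed (use G dist E in \<open>simp_all add: switch_def\<close>)

lemma triangle_switch_in_Gnd:
  "triangle_switch n d G H \<Longrightarrow> H \<in> Gnd n d"
  unfolding triangle_switch_def by (rule switch_with_in_Gnd)

lemma tri_sim_path_1:
  assumes "triangle_switch n d G H"
  shows "tri_sim_path n d 1 G H"
proof -
  have "G \<in> Gnd n d"
    using assms unfolding triangle_switch_def switch_with_def by blast
  moreover have "H \<in> Gnd n d"
    using assms by (rule triangle_switch_in_Gnd)
  ultimately show ?thesis
    using assms unfolding tri_sim_path_def
    by (intro exI[of _ "\<lambda>i. if i = 0 then G else H"]) (simp add: le_Suc_eq)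
qed

lemma tri_sim_path_Cons:
  assumes "triangle_switch n d G G'" and "tri_sim_path n d k G' H"
  shows "tri_sim_path n d (Suc k) G H"
proof -
  obtain X where X: "X 0 = G'" "X k = H" "\<forall>i\<le>k. X i \<in> Gnd n d"
    "\<forall>i<k. triangle_switch n d (X i) (X (Suc i))"
    using assms(2) unfolding tri_sim_path_def by blast
  have "G \<in> Gnd n d"
    using assms(1) unfolding triangle_switch_def switch_with_def by blast
  with assms(1) X have "\<forall>i\<le>Suc k. case_nat G X i \<in> Gnd n d"
    "\<forall>i<Suc k. triangle_switch n d (case_nat G X i) (case_nat G X (Suc i))"
    by (auto split: nat.split)
  then show ?thesis
    using X(2) unfolding tri_sim_path_def by (intro exI[of _ "case_nat G X"]) simp
qed

lemma tri_sim_path_4: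
  assumes "triangle_switch n d G G1" "triangle_switch n d G1 G2" "triangle_switch n d G2 G3"
    and "triangle_switch n d G3 G4"
  shows "tri_sim_path n d 4 G G4"
  using tri_sim_path_Cons[OF assms(1) tri_sim_path_Cons[OF assms(2) tri_sim_path_Cons[OF assms(3)
        tri_sim_path_1[OF assms(4)]]]]
  by (simp add: numeral_eq_Suc)

(* The first switch creates the edge xp, so that a1 x lies in the triangle a1 x p during the two
   middle switches; the last switch removes xp again. *)
lemma tri_sim_path_switch_via_paths:
  assumes G: "G \<in> Gnd n d" and dist: "distinct [a1,a2,a3,a4,x,p,y,z]"
    and E: "{a1,a2} \<in> G" "{a3,a4} \<in> G" "{a1,x} \<in> G" "{a1,p} \<in> G" "{x,y} \<in> G" "{p,z} \<in> G"
    and N: "{a1,a3} \<notin> G" "{a2,a4} \<notin> G" "{x,p} \<notin> G" "{y,z} \<notin> G" "{a4,x} \<notin> G"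
  shows "tri_sim_path n d 4 G (switch G a1 a2 a3 a4)"
proof -
  have E': "{a2,a1} \<in> G" "{a4,a3} \<in> G" "{x,a1} \<in> G" "{p,a1} \<in> G" "{y,x} \<in> G" "{z,p} \<in> G"
    and N': "{a3,a1} \<notin> G" "{a4,a2} \<notin> G" "{p,x} \<notin> G" "{z,y} \<notin> G" "{x,a4} \<notin> G"
    using E N by (simp_all add: insert_commute)
  define G1 where "G1 = switch G x y p z"
  define G2 where "G2 = switch G1 a1 x a3 a4"
  define G3 where "G3 = switch G2 a1 a2 x a4"
  have s1: "triangle_switch n d G G1"
    unfolding G1_def
    by (rule triangle_switchI[where h=a1 and u=x and v=p])
       (use G dist E N E' N' in \<open>auto simp: insert_commute\<close>)
  have s2: "triangle_switch n d G1 G2"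
    unfolding G2_def
    by (rule triangle_switchI[where h=p and u=a1 and v=x])
       (use triangle_switch_in_Gnd[OF s1] dist E N E' N'
         in \<open>auto simp: G1_def mem_switch doubleton_eq_iff\<close>)
  have s3: "triangle_switch n d G2 G3"
    unfolding G3_def
    by (rule triangle_switchI[where h=p and u=a1 and v=x])
       (use triangle_switch_in_Gnd[OF s2] dist E N E' N'
         in \<open>auto simp: G2_def G1_def mem_switch doubleton_eq_iff\<close>)
  have s4: "triangle_switch n d G3 (switch G3 x p y z)"
    by (rule triangle_switchI[where h=a1 and u=x and v=p])
       (use triangle_switch_in_Gnd[OF s3] dist E N E' N'
         in \<open>auto simp: G3_def G2_def G1_def mem_switch doubleton_eq_iff\<close>)
  have "e \<in> switch G3 x p y z \<longleftrightarrow> e \<in> switch G a1 a2 a3 a4" for e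
  proof (cases "e \<in> {{x,y},{p,z},{x,p},{y,z},{a1,x},{a3,a4},{a1,a3},{x,a4},{a1,a2},{a2,a4}}")
    case True
    then show ?thesis
      using dist E N E' N' unfolding G3_def G2_def G1_def
      by (elim insertE emptyE) (auto simp: mem_switch doubleton_eq_iff)
  next
    case False
    then show ?thesis
      unfolding G3_def G2_def G1_def by (simp add: mem_switch)
  qed
  then have "switch G3 x p y z = switch G a1 a2 a3 a4" by blast
  then show ?thesis
    using tri_sim_path_4[OF s1 s2 s3 s4] by simp
qed

lemma tri_sim_path_switch_via_cycle_a3:
  assumes G: "G \<in> Gnd n d" and dist: "distinct [a1,a2,a3,a4,p,z1,z2,y]"
    and E: "{a1,a2} \<in> G" "{a3,a4} \<in> G" "{a1,p} \<in> G" "{p,z1} \<in> G" "{p,z2} \<in> G"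
      "{y,z1} \<in> G" "{y,z2} \<in> G"
    and N: "{a1,a3} \<notin> G" "{a2,a4} \<notin> G" "{a1,z1} \<notin> G" "{p,y} \<notin> G" "{a4,p} \<notin> G"
      "{a3,y} \<notin> G"
  shows "tri_sim_path n d 4 G (switch G a1 a2 a3 a4)"
proof -
  have E': "{a2,a1} \<in> G" "{a4,a3} \<in> G" "{p,a1} \<in> G" "{z1,p} \<in> G" "{z2,p} \<in> G"
      "{z1,y} \<in> G" "{z2,y} \<in> G"
    and N': "{a3,a1} \<notin> G" "{a4,a2} \<notin> G" "{z1,a1} \<notin> G" "{y,p} \<notin> G" "{p,a4} \<notin> G"
      "{y,a3} \<notin> G"
    using E N by (simp_all add: insert_commute)
  define G1 where "G1 = switch G a1 p z1 y"
  define G2 where "G2 = switch G1 a3 a4 y p"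
  define G3 where "G3 = switch G2 a1 a2 p a4"
  have s1: "triangle_switch n d G G1"
    unfolding G1_def
    by (rule triangle_switchI[where h=z2 and u=p and v=y])
       (use G dist E N E' N' in \<open>auto simp: insert_commute\<close>)
  have s2: "triangle_switch n d G1 G2"
    unfolding G2_def
    by (rule triangle_switchI[where h=z2 and u=y and v=p])
       (use triangle_switch_in_Gnd[OF s1] dist E N E' N'
         in \<open>auto simp: G1_def mem_switch doubleton_eq_iff\<close>)
  have s3: "triangle_switch n d G2 G3"
    unfolding G3_def
    by (rule triangle_switchI[where h=z1 and u=a1 and v=p])
       (use triangle_switch_in_Gnd[OF s2] dist E N E' N'
         in \<open>auto simp: G2_def G1_def mem_switch doubleton_eq_iff\<close>)
  have s4: "triangle_switch n d G3 (switch G3 a1 z1 a3 y)"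
    by (rule triangle_switchI[where h=p and u=a1 and v=z1])
       (use triangle_switch_in_Gnd[OF s3] dist E N E' N'
         in \<open>auto simp: G3_def G2_def G1_def mem_switch doubleton_eq_iff\<close>)
  have "e \<in> switch G3 a1 z1 a3 y \<longleftrightarrow> e \<in> switch G a1 a2 a3 a4" for e
  proof (cases "e \<in> {{a1,p},{z1,y},{a1,z1},{p,y},{y,p},{a3,a4},{a3,y},{a4,p},{p,a4},
      {a1,a2},{a2,a4},{a1,a3}}")
    case True
    then show ?thesis
      using dist E N E' N' unfolding G3_def G2_def G1_def
      by (elim insertE emptyE) (auto simp: mem_switch doubleton_eq_iff)
  next
    case False
    then show ?thesis
      unfolding G3_def G2_def G1_def by (simp add: mem_switch)
  qed
  then have "switch G3 a1 z1 a3 y = switch G a1 a2 a3 a4" by blast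
  then show ?thesis
    using tri_sim_path_4[OF s1 s2 s3 s4] by simp
qed

lemma tri_sim_path_switch_via_cycle_a2:
  assumes G: "G \<in> Gnd n d" and dist: "distinct [a1,a2,a3,a4,p,z1,z2,y]"
    and E: "{a1,a2} \<in> G" "{a3,a4} \<in> G" "{a1,p} \<in> G" "{p,z1} \<in> G" "{p,z2} \<in> G"
      "{y,z1} \<in> G" "{y,z2} \<in> G"
    and N: "{a1,a3} \<notin> G" "{a2,a4} \<notin> G" "{a1,z1} \<notin> G" "{p,y} \<notin> G" "{a4,p} \<notin> G"
      "{a2,y} \<notin> G"
  shows "tri_sim_path n d 4 G (switch G a1 a2 a3 a4)"
proof -
  have E': "{a2,a1} \<in> G" "{a4,a3} \<in> G" "{p,a1} \<in> G" "{z1,p} \<in> G" "{z2,p} \<in> G"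
      "{z1,y} \<in> G" "{z2,y} \<in> G"
    and N': "{a3,a1} \<notin> G" "{a4,a2} \<notin> G" "{z1,a1} \<notin> G" "{y,p} \<notin> G" "{p,a4} \<notin> G"
      "{y,a2} \<notin> G"
    using E N by (simp_all add: insert_commute)
  define G1 where "G1 = switch G a1 a2 z1 y"
  define G2 where "G2 = switch G1 a1 p a3 a4"
  define G3 where "G3 = switch G2 a2 y a4 p"
  have s1: "triangle_switch n d G G1"
    unfolding G1_def
    by (rule triangle_switchI[where h=p and u=a1 and v=z1])
       (use G dist E N E' N' in \<open>auto simp: insert_commute\<close>)
  have s2: "triangle_switch n d G1 G2"
    unfolding G2_def
    by (rule triangle_switchI[where h=z1 and u=a1 and v=p])
       (use triangle_switch_in_Gnd[OF s1] dist E N E' N'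
         in \<open>auto simp: G1_def mem_switch doubleton_eq_iff\<close>)
  have s3: "triangle_switch n d G2 G3"
    unfolding G3_def
    by (rule triangle_switchI[where h=z2 and u=y and v=p])
       (use triangle_switch_in_Gnd[OF s2] dist E N E' N'
         in \<open>auto simp: G2_def G1_def mem_switch doubleton_eq_iff\<close>)
  have s4: "triangle_switch n d G3 (switch G3 a1 z1 p y)"
    by (rule triangle_switchI[where h=z2 and u=p and v=y])
       (use triangle_switch_in_Gnd[OF s3] dist E N E' N'
         in \<open>auto simp: G3_def G2_def G1_def mem_switch doubleton_eq_iff\<close>)
  have "e \<in> switch G3 a1 z1 p y \<longleftrightarrow> e \<in> switch G a1 a2 a3 a4" for e
  proof (cases "e \<in> {{a1,a2},{z1,y},{a1,z1},{a2,y},{a1,p},{a3,a4},{a1,a3},{p,a4},{a4,p},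
      {a2,a4},{y,p},{p,y}}")
    case True
    then show ?thesis
      using dist E N E' N' unfolding G3_def G2_def G1_def
      by (elim insertE emptyE) (auto simp: mem_switch doubleton_eq_iff)
  next
    case False
    then show ?thesis
      unfolding G3_def G2_def G1_def by (simp add: mem_switch)
  qed
  then have "switch G3 a1 z1 p y = switch G a1 a2 a3 a4" by blast
  then show ?thesis
    using tri_sim_path_4[OF s1 s2 s3 s4] by simp
qed

locale isolated_switch =
  fixes n :: nat and d :: "nat \<Rightarrow> nat" and G :: graph and a1 a2 a3 a4 :: nat
  assumes G: "G \<in> Gnd n d"
    and min_degree: "\<And>i. i \<in> {1..n} \<Longrightarrow> 3 \<le> d i"
    and dist: "distinct [a1,a2,a3,a4]"
    and switched_edges: "{a1,a2} \<in> G" "{a3,a4} \<in> G"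
    and non_edges: "{a1,a3} \<notin> G" "{a2,a4} \<notin> G" "{a1,a4} \<notin> G" "{a2,a3} \<notin> G"
    and no_common_nbr: "\<And>u v w. u \<in> {a1,a2,a3,a4} \<Longrightarrow> v \<in> {a1,a2,a3,a4} \<Longrightarrow> u \<noteq> v \<Longrightarrow>
      {u,w} \<in> G \<Longrightarrow> {v,w} \<notin> G"
    and no_triangle: "\<And>a u w. a \<in> {a1,a2,a3,a4} \<Longrightarrow> u \<notin> {a1,a2,a3,a4} \<Longrightarrow> w \<notin> {a1,a2,a3,a4} \<Longrightarrow>
      {a,u} \<in> G \<Longrightarrow> {a,w} \<in> G \<Longrightarrow> {u,w} \<notin> G"
begin

lemma two_nbrs_avoiding:
  assumes "v \<in> {1..n}"
  obtains w1 w2 where "{v,w1} \<in> G" "{v,w2} \<in> G" "w1 \<noteq> w2" "w1 \<noteq> b" "w2 \<noteq> b"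
proof -
  obtain w1 where "{v,w1} \<in> G" "w1 \<noteq> b"
    using Gnd_neighbour_avoiding[OF G assms min_degree[OF assms], of b b] by blast
  moreover obtain w2 where "{v,w2} \<in> G" "w2 \<noteq> b" "w2 \<noteq> w1"
    using Gnd_neighbour_avoiding[OF G assms min_degree[OF assms], of b w1] by blast
  ultimately show thesis using that by blast
qed

lemma nbr_of_nbr_outside:
  assumes "a \<in> {a1,a2,a3,a4}" "{a,t} \<in> G" "{t,w} \<in> G" "w \<noteq> a"
  shows "w \<notin> {a1,a2,a3,a4}"
  using no_common_nbr[of a w t] assms by (auto simp: insert_commute)

lemma nbr_of_a1_outside:
  assumes "{a1,t} \<in> G" "t \<noteq> a2"
  shows "t \<notin> {a1,a2,a3,a4}"
  using assms non_edges Gnd_edgeD(1)[OF G assms(1)] by auto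

lemma tri_sim_path_via_common_nbrs:
  assumes p: "{a1,p} \<in> G" "p \<notin> {a1,a2,a3,a4}"
    and y: "y \<notin> {a1,a2,a3,a4}" "y \<noteq> p" "{p,y} \<notin> G"
    and z: "{p,z1} \<in> G" "{p,z2} \<in> G" "{y,z1} \<in> G" "{y,z2} \<in> G" "z1 \<noteq> z2" "z1 \<noteq> a1" "z2 \<noteq> a1"
  shows "tri_sim_path n d 4 G (switch G a1 a2 a3 a4)"
proof -
  have z1_outside: "z1 \<notin> {a1,a2,a3,a4}" and "z2 \<notin> {a1,a2,a3,a4}"
    using nbr_of_nbr_outside[of a1 p] p z by auto
  then have dist8: "distinct [a1,a2,a3,a4,p,z1,z2,y]"
    using dist p y z Gnd_edgeD(1)[OF G] by auto
  have N: "{a1,z1} \<notin> G" "{a4,p} \<notin> G"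
    using no_triangle[of a1 p z1] no_common_nbr[of a1 a4 p] p z z1_outside dist by auto
  have "{a3,y} \<notin> G \<or> {a2,y} \<notin> G"
    using no_common_nbr[of a3 a2 y] dist by auto
  then show ?thesis
    using tri_sim_path_switch_via_cycle_a3[OF G dist8 switched_edges p(1) z(1-4) non_edges(1,2)
        N(1) y(3) N(2)]
      tri_sim_path_switch_via_cycle_a2[OF G dist8 switched_edges p(1) z(1-4) non_edges(1,2)
        N(1) y(3) N(2)]
    by blast
qed

lemma tri_sim_path_via_nbr_not_adjacent:
  assumes xp: "{a1,x} \<in> G" "{a1,p} \<in> G" "x \<notin> {a1,a2,a3,a4}" "p \<notin> {a1,a2,a3,a4}" "{x,p} \<notin> G"
    and y: "{x,y} \<in> G" "y \<noteq> a1" "{p,y} \<notin> G"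
  shows "tri_sim_path n d 4 G (switch G a1 a2 a3 a4)"
proof -
  have y_outside: "y \<notin> {a1,a2,a3,a4}"
    using nbr_of_nbr_outside[of a1 x y] xp y by auto
  have "y \<noteq> p"
    using y xp by auto
  show ?thesis
  proof (cases "\<forall>z. {p,z} \<in> G \<longrightarrow> z \<noteq> a1 \<longrightarrow> {y,z} \<in> G")
    case True
    obtain z1 z2 where "{p,z1} \<in> G" "{p,z2} \<in> G" "z1 \<noteq> z2" "z1 \<noteq> a1" "z2 \<noteq> a1"
      using two_nbrs_avoiding[OF Gnd_edgeD(3)[OF G xp(2)]] by metis
    with True show ?thesis
      using tri_sim_path_via_common_nbrs[of p y z1 z2] xp y y_outside \<open>y \<noteq> p\<close> by auto
  next
    case False
    then obtain z where z: "{p,z} \<in> G" "z \<noteq> a1" "{y,z} \<notin> G" by blast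
    have "z \<notin> {a1,a2,a3,a4}"
      using nbr_of_nbr_outside[of a1 p z] xp z by auto
    moreover have "{z,p} \<in> G"
      using z(1) by (simp add: insert_commute)
    ultimately have "distinct [a1,a2,a3,a4,x,p,y,z]"
      using dist xp y y_outside z Gnd_edgeD(1)[OF G] by auto
    moreover have "{a4,x} \<notin> G"
      using no_common_nbr[of a1 a4 x] xp dist by auto
    ultimately show ?thesis
      using tri_sim_path_switch_via_paths[OF G _ switched_edges xp(1,2) y(1) z(1) non_edges(1,2)
          xp(5) z(3)] by blast
  qed
qed

theorem tri_sim_path_switch: "tri_sim_path n d 4 G (switch G a1 a2 a3 a4)"
proof -
  obtain x p where xp: "{a1,x} \<in> G" "{a1,p} \<in> G" "x \<noteq> p" "x \<noteq> a2" "p \<noteq> a2"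
    using two_nbrs_avoiding[OF Gnd_edgeD(2)[OF G switched_edges(1)]] by metis
  then have outside: "x \<notin> {a1,a2,a3,a4}" "p \<notin> {a1,a2,a3,a4}"
    using nbr_of_a1_outside by auto
  then have "{x,p} \<notin> G" "{p,x} \<notin> G"
    using no_triangle[of a1 x p] xp by (auto simp: insert_commute)
  show ?thesis
  proof (cases "\<forall>y. {x,y} \<in> G \<longrightarrow> y \<noteq> a1 \<longrightarrow> {p,y} \<in> G")
    case True
    obtain y1 y2 where y: "{x,y1} \<in> G" "{x,y2} \<in> G" "y1 \<noteq> y2" "y1 \<noteq> a1" "y2 \<noteq> a1"
      using two_nbrs_avoiding[OF Gnd_edgeD(3)[OF G xp(1)]] by metis
    with True have "{p,y1} \<in> G" "{p,y2} \<in> G" by auto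
    then show ?thesis
      using tri_sim_path_via_common_nbrs[of p x y1 y2] xp outside y \<open>{p,x} \<notin> G\<close> by auto
  next
    case False
    then show ?thesis
      using tri_sim_path_via_nbr_not_adjacent xp outside \<open>{x,p} \<notin> G\<close> by blast
  qed
qed

end

theorem lemma3:
  fixes n :: nat and d :: "nat \<Rightarrow> nat" and G H :: graph and a1 a2 a3 a4 :: nat
  assumes "graphical n d"
    and "\<forall>i\<in>{1..n}. d i \<ge> 3"
    and "G \<in> Gnd n d"
    and "distinct [a1,a2,a3,a4]" and "{a1,a2,a3,a4} \<subseteq> {1..n}"
    and "{a1,a2} \<in> G" and "{a3,a4} \<in> G"
    and "{a1,a3} \<notin> G" and "{a2,a4} \<notin> G"
    and "H = (G - {{a1,a2},{a3,a4}}) \<union> {{a1,a3},{a2,a4}}"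
    and "{a1,a4} \<notin> G" and "{a2,a3} \<notin> G"
    and "\<forall>x\<in>{a1,a2,a3,a4}. \<forall>y\<in>{a1,a2,a3,a4}. x \<noteq> y \<longrightarrow>
            \<not> (\<exists>w. {x,w} \<in> G \<and> {y,w} \<in> G)"
    and "\<forall>a\<in>{a1,a2,a3,a4}. \<forall>u w. u \<notin> {a1,a2,a3,a4} \<and> w \<notin> {a1,a2,a3,a4} \<longrightarrow>
            \<not> ({a,u} \<in> G \<and> {a,w} \<in> G \<and> {u,w} \<in> G)"
  shows "\<exists>\<kappa>\<le>5. tri_sim_path n d \<kappa> G H"
proof -
  interpret isolated_switch n d G a1 a2 a3 a4
    by unfold_locales (use assms in blast)+
  have "H = switch G a1 a2 a3 a4"
    using assms(10) unfolding switch_def .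
  then show ?thesis
    using tri_sim_path_switch by (intro exI[of _ 4]) simp
qed

end
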